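(* Let $q\ge2$, let $r$ be a positive integer, and let $f$ be a positive real-valued function on the nonnegative integers that is $q$-quasimultiplicative with parameter $r$, i.e. $f(q^{k+r}a+b)=f(a)f(b)$ for all nonnegative integers $a,b,k$ with $0\le b<q^k$. Let $\mathcal{M}_k=\{0,1,\dots,q^k-1\}$ and $$F(x,t)=\sum_{k\ge0}x^k\sum_{n\in\mathcal{M}_k}f(n)^t.$$ Let $\mathcal{B}$ be the set of all positive integers not divisible by $q$ whose $q$-ary representation does not contain the block $0^r$, let $\ell(n)$ be the length of the $q$-ary representation of $n$, and $B(x,t)=\sum_{n\in\mathcal{B}}x^{\ell(n)}f(n)^t$. Then, as formal power series in $x$, $$F(x,t)=\frac{1}{1-x}\cdot\frac{1}{1-\frac{x^r}{1-x}B(x,t)}\Bigl(1+(1+x+\dots+x^{r-1})B(x,t)\Bigr)=\frac{1+(1+x+\dots+x^{r-1})B(x,t)}{1-x-x^rB(x,t)}.$$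
   Context: The $q$-ary representation of a positive integer has no leading zeros. *)

theory Defs
  imports Complex_Main "HOL-Library.Sublist" "HOL-Computational_Algebra.Formal_Power_Series"
begin

text \<open>q-ary digits of n, least significant digit first; no leading zeros (0 has the empty representation).\<close>
fun qdigits :: "nat \<Rightarrow> nat \<Rightarrow> nat list" where
  "qdigits q n = (if n = 0 \<or> q < 2 then [] else n mod q # qdigits q (n div q))"

declare qdigits.simps [simp del]

definition qlen :: "nat \<Rightarrow> nat \<Rightarrow> nat" where
  "qlen q n = length (qdigits q n)"

definition q_quasimultiplicative :: "nat \<Rightarrow> nat \<Rightarrow> (nat \<Rightarrow> real) \<Rightarrow> bool" where
  "q_quasimultiplicative q r f \<longleftrightarrow>
     (\<forall>a b k. b < q ^ k \<longrightarrow> f (q ^ (k + r) * a + b) = f a * f b)"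

definition blockset :: "nat \<Rightarrow> nat \<Rightarrow> nat set" where
  "blockset q r = {n. 0 < n \<and> \<not> q dvd n \<and> \<not> sublist (replicate r 0) (qdigits q n)}"

definition genF :: "nat \<Rightarrow> (nat \<Rightarrow> real) \<Rightarrow> real \<Rightarrow> real fps" where
  "genF q f t = Abs_fps (\<lambda>k. \<Sum>n\<in>{0..<q ^ k}. f n powr t)"

definition genB :: "nat \<Rightarrow> nat \<Rightarrow> (nat \<Rightarrow> real) \<Rightarrow> real \<Rightarrow> real fps" where
  "genB q r f t = Abs_fps (\<lambda>m. \<Sum>n\<in>{n\<in>blockset q r. qlen q n = m}. f n powr t)"

end

theory Submission
  imports Defs
begin

text \<open>Cutting the q-ary representation of \<open>n > 0\<close> just above its most significant block
  \<open>0\<^sup>r\<close> (or above its trailing zeros, if it contains no such block) writes n uniquely as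
  \<open>n = q ^ p * c + d\<close> with \<open>c \<in> \<B>\<close>, where either \<open>p < r\<close> and \<open>d = 0\<close>, or \<open>d < q ^ (p - r)\<close>.
  Quasimultiplicativity gives \<open>f n = f c * f d\<close>, so summing \<open>f n powr t\<close> over the numbers of
  length k turns into a convolution, and the generating functions satisfy
  \<open>(1 - x) F = 1 + B (1 + x + \<dots> + x ^ (r - 1) + x ^ r F)\<close>; solving for F gives the claim.\<close>

unbundle fps_syntax

lemma qdigits_pos: "q \<ge> 2 \<Longrightarrow> 0 < n \<Longrightarrow> qdigits q n = n mod q # qdigits q (n div q)"
  by (subst qdigits.simps) auto

lemma qdigits_0 [simp]: "qdigits q 0 = []"
  by (subst qdigits.simps) auto

lemma qlen_pos: "q \<ge> 2 \<Longrightarrow> 0 < n \<Longrightarrow> qlen q n = Suc (qlen q (n div q))"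
  by (simp add: qlen_def qdigits_pos)

lemma qlen_0 [simp]: "qlen q 0 = 0"
  by (simp add: qlen_def)

lemma qlen_le_iff: "q \<ge> 2 \<Longrightarrow> qlen q n \<le> k \<longleftrightarrow> n < q ^ k"
proof (induction n arbitrary: k rule: less_induct)
  case (less n)
  show ?case
  proof (cases "n = 0")
    case False
    show ?thesis
    proof (cases k)
      case (Suc k')
      have "qlen q n \<le> k \<longleftrightarrow> n div q < q ^ k'"
        using less.IH[of "n div q" k'] False less.prems Suc by (simp add: qlen_pos)
      also have "\<dots> \<longleftrightarrow> n < q ^ k"
        using Suc less.prems by (simp add: div_less_iff_less_mult mult.commute)
      finally show ?thesis .
    qed (use False less.prems in \<open>simp add: qlen_pos\<close>)
  qed (use less.prems in simp)
qed

lemma qlen_eq_0_iff: "q \<ge> 2 \<Longrightarrow> qlen q n = 0 \<longleftrightarrow> n = 0"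
  using qlen_le_iff[of q n 0] by auto

lemma qlen_shift:
  assumes "q \<ge> 2" "0 < c" "d < q ^ p"
  shows "qlen q (q ^ p * c + d) = qlen q c + p"
  using assms
proof (induction p arbitrary: d)
  case (Suc p)
  have "(q ^ Suc p * c + d) div q = q ^ p * c + d div q"
    using Suc.prems by (simp add: div_add1_eq algebra_simps)
  moreover have "d div q < q ^ p"
    using Suc.prems by (simp add: div_less_iff_less_mult mult.commute)
  ultimately show ?case
    using Suc.IH[of "d div q"] Suc.prems by (simp add: qlen_pos)
qed simp

lemma power_mult_add_div_power:
  assumes "0 < (q::nat)" "s \<le> p" "d < q ^ s"
  shows "(q ^ p * c + d) div q ^ s = q ^ (p - s) * c"
proof -
  have "q ^ p * c = q ^ s * (q ^ (p - s) * c)"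
    using assms(2) by (simp add: mult.assoc flip: power_add)
  then have "(q ^ p * c + d) div q ^ s = (d + q ^ s * (q ^ (p - s) * c)) div q ^ s"
    by (simp only: add.commute)
  then show ?thesis
    using assms(1,3) by simp
qed

lemma power_mult_div_power_ge:
  "0 < (q::nat) \<Longrightarrow> j \<le> i \<Longrightarrow> q ^ j * c div q ^ i = c div q ^ (i - j)"
proof -
  assume "0 < q" "j \<le> i"
  then have "q ^ i = q ^ j * q ^ (i - j)" by (simp flip: power_add)
  with \<open>0 < q\<close> show ?thesis by (simp add: div_mult2_eq)
qed

definition has_zero_block :: "nat \<Rightarrow> nat \<Rightarrow> nat \<Rightarrow> bool" where
  "has_zero_block q r n \<longleftrightarrow> (\<exists>i. 0 < n div q ^ i \<and> q ^ r dvd n div q ^ i)"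

lemma has_zero_block_iff_dvd_or_div:
  assumes "0 < q"
  shows "has_zero_block q r n \<longleftrightarrow> (0 < n \<and> q ^ r dvd n) \<or> has_zero_block q r (n div q)"
proof
  assume "has_zero_block q r n"
  then obtain i where "0 < n div q ^ i" "q ^ r dvd n div q ^ i"
    by (auto simp: has_zero_block_def)
  then show "(0 < n \<and> q ^ r dvd n) \<or> has_zero_block q r (n div q)"
    by (cases i) (auto simp: has_zero_block_def div_mult2_eq intro!: exI)
next
  assume "(0 < n \<and> q ^ r dvd n) \<or> has_zero_block q r (n div q)"
  then show "has_zero_block q r n"
    unfolding has_zero_block_def
    by (auto simp: div_mult2_eq intro: exI[of _ 0] exI[of _ "Suc _"])
qed

lemma prefix_replicate_zero_qdigits_iff:
  "q \<ge> 2 \<Longrightarrow> prefix (replicate r 0) (qdigits q n) \<longleftrightarrow> r = 0 \<or> (0 < n \<and> q ^ r dvd n)"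
proof (induction r arbitrary: n)
  case (Suc r)
  show ?case
  proof (cases "n = 0")
    case False
    have "prefix (replicate (Suc r) 0) (qdigits q n)
          \<longleftrightarrow> q dvd n \<and> (r = 0 \<or> (0 < n div q \<and> q ^ r dvd n div q))"
      using Suc False by (simp add: qdigits_pos dvd_eq_mod_eq_0)
    also have "\<dots> \<longleftrightarrow> q ^ Suc r dvd n"
      using False Suc.prems by (auto simp: dvd_div_iff_mult mult.commute[of q] elim!: dvdE)
    finally show ?thesis using False by simp
  qed simp
qed simp

lemma sublist_replicate_zero_qdigits_iff:
  assumes "q \<ge> 2" "0 < r"
  shows "sublist (replicate r 0) (qdigits q n) \<longleftrightarrow> has_zero_block q r n"
proof (induction n rule: less_induct)
  case (less n)
  show ?case
  proof (cases "n = 0")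
    case False
    have "sublist (replicate r 0) (qdigits q n)
          \<longleftrightarrow> prefix (replicate r 0) (qdigits q n) \<or> sublist (replicate r 0) (qdigits q (n div q))"
      using assms False by (simp add: qdigits_pos sublist_Cons_right)
    then show ?thesis
      using less.IH[of "n div q"] assms False
      by (simp add: prefix_replicate_zero_qdigits_iff has_zero_block_iff_dvd_or_div[of q r n])
  qed (use assms in \<open>simp add: has_zero_block_def\<close>)
qed

lemma blockset_iff:
  "q \<ge> 2 \<Longrightarrow> 0 < r \<Longrightarrow> c \<in> blockset q r \<longleftrightarrow> 0 < c \<and> \<not> q dvd c \<and> \<not> has_zero_block q r c"
  by (simp add: blockset_def sublist_replicate_zero_qdigits_iff)

lemma has_zero_block_mult_power:
  assumes "q \<ge> 2" "j < r" "\<not> q dvd c" "has_zero_block q r (q ^ j * c)"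
  shows "has_zero_block q r c"
proof -
  obtain i where i: "0 < q ^ j * c div q ^ i" "q ^ r dvd q ^ j * c div q ^ i"
    using assms(4) by (auto simp: has_zero_block_def)
  show ?thesis
  proof (cases "i \<le> j")
    case True
    have "q ^ j * c div q ^ i = q ^ (j - i) * c"
      using True assms(1) power_mult_add_div_power[of q i j 0 c] by simp
    moreover have "q ^ r = q ^ (j - i) * q ^ (r - (j - i))"
      using assms(2) by (simp flip: power_add)
    ultimately have "q ^ (r - (j - i)) dvd c"
      using i(2) assms(1) by simp
    then have "q dvd c"
      using assms(2) by (meson dvd_power dvd_trans zero_less_diff diff_le_self le_less_trans)
    with assms(3) show ?thesis ..
  next
    case False
    then have "q ^ j * c div q ^ i = c div q ^ (i - j)"
      using assms(1) by (simp add: power_mult_div_power_ge)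
    with i show ?thesis
      by (auto simp: has_zero_block_def)
  qed
qed

lemma digit_in_blockset:
  assumes "q \<ge> 2" "0 < r" "0 < a" "a < q"
  shows "a \<in> blockset q r"
proof -
  have "\<not> q ^ r dvd m" if "0 < m" "m \<le> a" for m
    using that assms self_le_power[of q r] by (auto dest: dvd_imp_le)
  then have "\<not> has_zero_block q r a"
    by (auto simp: has_zero_block_def div_le_dividend)
  with assms show ?thesis
    by (auto simp: blockset_iff dest: dvd_imp_le)
qed

lemma digit_cons_in_blockset:
  assumes "q \<ge> 2" "0 < r" "c \<in> blockset q r" "j < r" "0 < a" "a < q"
  shows "a + q * (q ^ j * c) \<in> blockset q r"
proof -
  have not_dvd: "\<not> q dvd a + q * (q ^ j * c)"
    using assms(5,6) by (auto simp: dvd_add_left_iff dest: dvd_imp_le)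
  then have "\<not> q ^ r dvd a + q * (q ^ j * c)"
    using assms(2) by (meson dvd_power dvd_trans)
  moreover have "\<not> has_zero_block q r (q ^ j * c)"
    using assms has_zero_block_mult_power[of q j r c] by (auto simp: blockset_iff)
  ultimately have "\<not> has_zero_block q r (a + q * (q ^ j * c))"
    using assms(1,6) has_zero_block_iff_dvd_or_div[of q r "a + q * (q ^ j * c)"] by simp
  with not_dvd assms(5) show ?thesis
    using assms(1,2) by (simp add: blockset_iff)
qed

text \<open>Below the top part \<open>c \<in> \<B>\<close> of \<open>n = q ^ p * c + d\<close>, the p lowest digits are either
  \<open>0\<^sup>p\<close> with \<open>p < r\<close>, or the block \<open>0\<^sup>r\<close> followed by \<open>p - r\<close> arbitrary digits.\<close>

definition low_parts :: "nat \<Rightarrow> nat \<Rightarrow> nat \<Rightarrow> nat set" where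
  "low_parts q r p = (if p < r then {0} else {0..<q ^ (p - r)})"

lemma low_parts_less_power: "0 < q \<Longrightarrow> d \<in> low_parts q r p \<Longrightarrow> d < q ^ p"
  by (auto simp: low_parts_def split: if_splits
      intro: less_le_trans[OF _ power_increasing[of "p - r" p q]])

lemma low_parts_Suc:
  assumes "a < q" "d \<in> low_parts q r p" "a = 0 \<or> r \<le> p"
  shows "a + q * d \<in> low_parts q r (Suc p)"
proof (cases "r \<le> p")
  case True
  have "a + q * d < q * (d + 1)"
    using assms(1) by simp
  also have "\<dots> \<le> q * q ^ (p - r)"
    using True assms(2) by (intro mult_le_mono2) (simp add: low_parts_def)
  finally show ?thesis
    using True by (simp add: low_parts_def Suc_diff_le)
qed (use assms in \<open>auto simp: low_parts_def\<close>)

lemma block_decomposition_exists: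
  assumes "q \<ge> 2" "0 < r" "0 < n"
  shows "\<exists>p c d. c \<in> blockset q r \<and> d \<in> low_parts q r p \<and> n = q ^ p * c + d"
  using assms(3)
proof (induction n rule: less_induct)
  case (less n)
  define a where "a = n mod q"
  define m where "m = n div q"
  have n: "n = a + q * m" and a: "a < q"
    using assms(1) by (simp_all add: a_def m_def)
  show ?case
  proof (cases "m = 0")
    case True
    then have "n \<in> blockset q r"
      using less.prems a n assms digit_in_blockset by simp
    with assms(2) show ?thesis
      by (intro exI[of _ 0] exI[of _ n] exI[of _ 0]) (simp add: low_parts_def)
  next
    case False
    moreover have "m < n"
      using less.prems assms(1) by (simp add: m_def)
    ultimately obtain p c d where pcd: "c \<in> blockset q r" "d \<in> low_parts q r p" "m = q ^ p * c + d"
      using less.IH[of m] by blast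
    show ?thesis
    proof (cases "0 < a \<and> p < r")
      case True
      then have "n \<in> blockset q r"
        using pcd n a assms digit_cons_in_blockset[of q r c p a] by (simp add: low_parts_def)
      with assms(2) show ?thesis
        by (intro exI[of _ 0] exI[of _ n] exI[of _ 0]) (simp add: low_parts_def)
    next
      case False
      then have "a + q * d \<in> low_parts q r (Suc p)"
        using a pcd(2) by (intro low_parts_Suc) auto
      moreover have "n = q ^ Suc p * c + (a + q * d)"
        using n pcd(3) by (simp add: algebra_simps)
      ultimately show ?thesis
        using pcd(1) by blast
    qed
  qed
qed

text \<open>The exponent p of a decomposition is the least e with \<open>n div q ^ e \<in> \<B>\<close>;
  this gives uniqueness.\<close>

lemma block_decomposition_div_notin:
  assumes "q \<ge> 2" "0 < r" "c \<in> blockset q r" "d \<in> low_parts q r p" "e < p"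
  shows "(q ^ p * c + d) div q ^ e \<notin> blockset q r"
proof (cases "d < q ^ e")
  case True
  then have "(q ^ p * c + d) div q ^ e = q ^ (p - e) * c"
    using assms(1,5) by (simp add: power_mult_add_div_power)
  moreover have "q dvd q ^ (p - e)"
    using assms(5) by simp
  ultimately show ?thesis
    using assms(1,2) by (auto simp: blockset_iff)
next
  case False
  then have "r \<le> p" and d: "d < q ^ (p - r)"
    using assms(1,4) by (auto simp: low_parts_def split: if_splits)
  then have "q ^ e < q ^ (p - r)"
    using False by simp
  then have "e < p - r"
    using assms(1) by simp
  then have "q ^ e * q ^ (p - r - e) = q ^ (p - r)"
    by (simp flip: power_add)
  then have "(q ^ p * c + d) div q ^ e div q ^ (p - r - e) = (q ^ p * c + d) div q ^ (p - r)"
    by (metis div_mult2_eq)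
  also have "\<dots> = q ^ r * c"
    using \<open>r \<le> p\<close> d assms(1) by (simp add: power_mult_add_div_power)
  finally have "has_zero_block q r ((q ^ p * c + d) div q ^ e)"
    using assms(1,2,3) unfolding has_zero_block_def
    by (intro exI[of _ "p - r - e"]) (auto simp: blockset_iff)
  then show ?thesis
    using assms(1,2) by (simp add: blockset_iff)
qed

lemma block_decomposition_unique:
  assumes q: "q \<ge> 2" and r: "0 < r"
    and c: "c \<in> blockset q r" "d \<in> low_parts q r p"
    and c': "c' \<in> blockset q r" "d' \<in> low_parts q r p'"
    and eq: "q ^ p * c + d = q ^ p' * c' + d'"
  shows "p = p' \<and> c = c' \<and> d = d'"
proof -
  have top: "(q ^ p * c + d) div q ^ p = c" "(q ^ p' * c' + d') div q ^ p' = c'"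
    using q c c' low_parts_less_power by (simp_all add: power_mult_add_div_power)
  have "p = p'"
  proof (rule linorder_cases[of p p'])
    assume "p < p'"
    then show ?thesis
      using block_decomposition_div_notin[OF q r c' \<open>p < p'\<close>] top c eq by simp
  next
    assume "p' < p"
    then show ?thesis
      using block_decomposition_div_notin[OF q r c \<open>p' < p\<close>] top c' eq by simp
  qed
  moreover have "d = d'"
  proof -
    have "d < q ^ p" "d' < q ^ p"
      using q c(2) c'(2) \<open>p = p'\<close> by (simp_all add: low_parts_less_power)
    then show ?thesis
      using eq \<open>p = p'\<close> by (metis add.commute mod_less mod_mult_self2)
  qed
  ultimately show ?thesis
    using eq top q by simp
qed

definition blocks_of_length :: "nat \<Rightarrow> nat \<Rightarrow> nat \<Rightarrow> nat set" where
  "blocks_of_length q r m = {n \<in> blockset q r. qlen q n = m}"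

lemma finite_blocks_of_length: "q \<ge> 2 \<Longrightarrow> finite (blocks_of_length q r m)"
  by (rule finite_subset[of _ "{..<q ^ m}"]) (auto simp: blocks_of_length_def simp flip: qlen_le_iff)

lemma blocks_of_length_0: "q \<ge> 2 \<Longrightarrow> 0 < r \<Longrightarrow> blocks_of_length q r 0 = {}"
  by (auto simp: blocks_of_length_def blockset_iff qlen_eq_0_iff)

lemma bij_betw_block_decomposition:
  assumes q: "q \<ge> 2" and r: "0 < r"
  shows "bij_betw (\<lambda>(p, c, d). q ^ p * c + d)
           (SIGMA p:{..k}. blocks_of_length q r (k - p) \<times> low_parts q r p)
           {n. 0 < n \<and> qlen q n = k}"
    (is "bij_betw ?h ?I _")
proof (rule bij_betw_imageI)
  show "inj_on ?h ?I"
    using block_decomposition_unique[OF q r] by (intro inj_onI) (auto simp: blocks_of_length_def)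
  have qlen_decomp: "qlen q (q ^ p * c + d) = qlen q c + p"
    if "c \<in> blockset q r" "d \<in> low_parts q r p" for p c d
    using that q r by (intro qlen_shift) (auto simp: blockset_iff low_parts_less_power)
  show "?h ` ?I = {n. 0 < n \<and> qlen q n = k}"
  proof (intro equalityI subsetI)
    fix n assume "n \<in> {n. 0 < n \<and> qlen q n = k}"
    then obtain p c d
      where "c \<in> blockset q r" "d \<in> low_parts q r p" "n = q ^ p * c + d" "qlen q n = k"
      using block_decomposition_exists[OF q r] by blast
    then show "n \<in> ?h ` ?I"
      using qlen_decomp by (auto simp: blocks_of_length_def intro!: image_eqI[of _ _ "(p, c, d)"])
  qed (use q r qlen_decomp in \<open>auto simp: blocks_of_length_def blockset_iff\<close>)
qed

lemma quasimultiplicativeD: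
  "q_quasimultiplicative q r f \<Longrightarrow> b < q ^ k \<Longrightarrow> f (q ^ (k + r) * a + b) = f a * f b"
  unfolding q_quasimultiplicative_def by blast

lemma quasimultiplicative_0:
  assumes "q_quasimultiplicative q r f" "f 0 \<noteq> 0"
  shows "f 0 = 1"
  using assms quasimultiplicativeD[OF assms(1), of 0 0 0] by simp

lemma quasimultiplicative_mult_power:
  assumes q: "q \<ge> 2" and Q: "q_quasimultiplicative q r f" and f1: "f 1 \<noteq> 0"
  shows "f (q ^ j * c) = f c"
proof -
  have "f (q ^ j * c) * f 1 = f (q ^ (1 + r) * (q ^ j * c) + 1)"
    using quasimultiplicativeD[OF Q, of 1 1] q by simp
  also have "q ^ (1 + r) * (q ^ j * c) = q ^ (Suc j + r) * c"
    by (simp add: power_add)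
  also have "f (q ^ (Suc j + r) * c + 1) = f c * f 1"
    using quasimultiplicativeD[OF Q, of 1 "Suc j"] q one_less_power[of q "Suc j"] by simp
  finally show ?thesis
    using f1 by simp
qed

text \<open>For \<open>p < r\<close> the factorisation holds because \<open>d = 0\<close> and \<open>f 0 = 1\<close>.\<close>

lemma quasimultiplicative_low_parts:
  assumes q: "q \<ge> 2" and Q: "q_quasimultiplicative q r f" and "f 0 \<noteq> 0" "f 1 \<noteq> 0"
    and d: "d \<in> low_parts q r p"
  shows "f (q ^ p * c + d) = f c * f d"
proof (cases "p < r")
  case True
  then show ?thesis
    using d assms quasimultiplicative_0[OF Q] quasimultiplicative_mult_power[OF q Q]
    by (simp add: low_parts_def)
next
  case False
  then show ?thesis
    using quasimultiplicativeD[OF Q, of d "p - r" c] d by (simp add: low_parts_def)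
qed

lemma sum_qlen_eq_convolution:
  assumes q: "q \<ge> 2" and r: "0 < r" and Q: "q_quasimultiplicative q r f"
    and fpos: "\<And>n. 0 < f n" and k: "1 \<le> k"
  shows "(\<Sum>n | qlen q n = k. f n powr t)
       = (\<Sum>p\<le>k. (\<Sum>c\<in>blocks_of_length q r (k - p). f c powr t)
                  * (\<Sum>d\<in>low_parts q r p. f d powr t))"
proof -
  let ?I = "SIGMA p:{..k}. blocks_of_length q r (k - p) \<times> low_parts q r p"
  have "{n. qlen q n = k} = {n. 0 < n \<and> qlen q n = k}"
    using k by (auto intro!: gr0I)
  then have "(\<Sum>n | qlen q n = k. f n powr t) = (\<Sum>(p, c, d)\<in>?I. f (q ^ p * c + d) powr t)"
    using sum.reindex_bij_betw[OF bij_betw_block_decomposition[OF q r], of "\<lambda>n. f n powr t" k]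
    by (simp add: case_prod_beta)
  also have "\<dots> = (\<Sum>(p, c, d)\<in>?I. f c powr t * f d powr t)"
    using quasimultiplicative_low_parts[OF q Q] fpos[of 0] fpos[of 1]
    by (intro sum.cong) (auto simp: powr_mult less_imp_le less_imp_neq[symmetric] fpos)
  also have "\<dots> = (\<Sum>p\<le>k. \<Sum>(c, d)\<in>blocks_of_length q r (k - p) \<times> low_parts q r p.
                      f c powr t * f d powr t)"
    using q by (intro sum.Sigma[symmetric]) (auto simp: finite_blocks_of_length low_parts_def)
  also have "\<dots> = (\<Sum>p\<le>k. (\<Sum>c\<in>blocks_of_length q r (k - p). f c powr t)
                            * (\<Sum>d\<in>low_parts q r p. f d powr t))"
    by (simp add: sum_product sum.cartesian_product)
  finally show ?thesis .
qed

lemma sum_low_parts: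
  assumes "f 0 = 1"
  shows "(\<Sum>d\<in>low_parts q r p. f d powr t) = ((\<Sum>i<r. fps_X ^ i) + fps_X ^ r * genF q f t) $ p"
  using assms by (simp add: low_parts_def fps_sum_nth fps_X_power_nth fps_X_power_mult_nth genF_def)

lemma genF_nth_diff:
  assumes "q \<ge> 2" "1 \<le> k"
  shows "genF q f t $ k = genF q f t $ (k - 1) + (\<Sum>n | qlen q n = k. f n powr t)"
proof -
  have lengths: "{0..<q ^ m} = {n. qlen q n \<le> m}" for m
    using assms(1) by (auto simp: qlen_le_iff)
  have split: "{n. qlen q n \<le> k} = {n. qlen q n \<le> k - 1} \<union> {n. qlen q n = k}"
    "{n. qlen q n \<le> k - 1} \<inter> {n. qlen q n = k} = {}"
    using assms(2) by auto
  have finite: "finite {n. qlen q n \<le> m}" for m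
    by (simp flip: lengths)
  then have "finite {n. qlen q n = k}"
    by (rule finite_subset[of _ "{n. qlen q n \<le> k}", rotated]) auto
  with split finite show ?thesis
    by (simp add: genF_def lengths sum.union_disjoint)
qed

lemma genF_functional_equation:
  assumes q: "q \<ge> 2" and r: "0 < r" and Q: "q_quasimultiplicative q r f" and fpos: "\<And>n. 0 < f n"
  shows "(1 - fps_X) * genF q f t = 1 + genB q r f t * ((\<Sum>i<r. fps_X ^ i) + fps_X ^ r * genF q f t)"
    (is "_ = 1 + ?B * ?G")
proof (rule fps_ext)
  fix k
  have f0: "f 0 = 1"
    using quasimultiplicative_0[OF Q] fpos[of 0] by simp
  have B: "?B $ m = (\<Sum>c\<in>blocks_of_length q r m. f c powr t)" for m
    by (simp add: genB_def blocks_of_length_def)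
  show "((1 - fps_X) * genF q f t) $ k = (1 + ?B * ?G) $ k"
  proof (cases "k = 0")
    case True
    then show ?thesis
      using q r f0 by (simp add: B blocks_of_length_0 genF_def)
  next
    case False
    have "((1 - fps_X) * genF q f t) $ k = (\<Sum>n | qlen q n = k. f n powr t)"
      using False genF_nth_diff[OF q, of k f t] by (simp add: algebra_simps)
    also have "\<dots> = (\<Sum>p\<le>k. ?G $ p * ?B $ (k - p))"
      using False sum_low_parts[where f = f, OF f0]
      by (simp add: sum_qlen_eq_convolution[OF q r Q fpos] B mult.commute)
    also have "\<dots> = (1 + ?B * ?G) $ k"
      using False by (simp add: fps_mult_nth atLeast0AtMost mult.commute[of ?B])
    finally show ?thesis .
  qed
qed

lemma fps_eq_divide_if_mult_eq:
  fixes D F N :: "'a::field fps"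
  assumes "D $ 0 \<noteq> 0" "D * F = N"
  shows "F = N / D"
proof -
  have "N / D = F * (D * inverse D)"
    using assms by (simp add: fps_divide_unit mult_ac)
  with assms(1) show ?thesis
    by (simp add: inverse_mult_eq_1')
qed

lemma fps_inverse_mult_inverse_one_minus:
  fixes a c :: "'a::field fps"
  assumes "a $ 0 \<noteq> 0"
  shows "inverse a * inverse (1 - c * inverse a) = inverse (a - c)"
proof -
  have "a * (1 - c * inverse a) = a - c * (a * inverse a)"
    by (simp add: algebra_simps)
  with assms show ?thesis
    by (simp add: inverse_mult_eq_1' flip: fps_inverse_mult)
qed

theorem proposition11:
  fixes q r :: nat and f :: "nat \<Rightarrow> real" and t :: real
  assumes "q \<ge> 2" and "r > 0"
    and "\<And>n. f n > 0"
    and "q_quasimultiplicative q r f"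
  shows "genF q f t =
           inverse (1 - fps_X) * inverse (1 - fps_X ^ r * inverse (1 - fps_X) * genB q r f t)
             * (1 + (\<Sum>i<r. fps_X ^ i) * genB q r f t)
       \<and> genF q f t =
           (1 + (\<Sum>i<r. fps_X ^ i) * genB q r f t) / (1 - fps_X - fps_X ^ r * genB q r f t)"
proof -
  define B where "B = genB q r f t"
  define N :: "real fps" where "N = 1 + (\<Sum>i<r. fps_X ^ i) * B"
  define D :: "real fps" where "D = 1 - fps_X - fps_X ^ r * B"
  have "D * genF q f t = N"
    using genF_functional_equation[OF assms(1,2,4,3), of t]
    by (simp add: D_def N_def B_def algebra_simps)
  moreover have D0: "D $ 0 \<noteq> 0"
    using assms(2) by (simp add: D_def fps_X_power_mult_nth)
  ultimately have "genF q f t = N / D"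
    by (rule fps_eq_divide_if_mult_eq[rotated])
  moreover have "inverse (1 - fps_X) * inverse (1 - fps_X ^ r * inverse (1 - fps_X) * B) = inverse D"
    using fps_inverse_mult_inverse_one_minus[of "1 - fps_X" "fps_X ^ r * B"]
    by (simp add: D_def mult_ac)
  ultimately show ?thesis
    using D0 by (simp add: B_def N_def D_def fps_divide_unit mult_ac)
qed

end
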